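(* Let $M$ be a finitely generated monoid which is quasi-isometric to a finitely generated group. Then $M$ is a group.
   Context: For a monoid $S$ generated by a finite set $A$, $d_A(x,y)=\inf\{|w|:w\in A^*,\ xw=y\}$ ($A^*$ the free monoid on $A$, $\inf\emptyset=\infty$). A map $f:(S,d_A)\to(T,d_B)$ is a quasi-isometry if there are $1\le\lambda<\infty$, $0<\epsilon<\infty$, $0\le\mu<\infty$ with $\frac1\lambda d_A(x,y)-\epsilon\le d_B(f(x),f(y))\le\lambda d_A(x,y)+\epsilon$ for all $x,y$, and for each $t\in T$ some $x\in S$ with $\max(d_B(t,f(x)),d_B(f(x),t))\le\mu$. Finitely generated monoids (groups being regarded as monoids) $S,T$ are quasi-isometric if $(S,d_A)$, $(T,d_B)$ are quasi-isometric for some finite (monoid) generating sets $A,B$. *)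

theory Defs
  imports "HOL-Algebra.Group" "HOL-Library.Extended_Real"
begin

definition word_prod :: "('a, 'b) monoid_scheme \<Rightarrow> 'a list \<Rightarrow> 'a" where
  "word_prod S w = foldr (\<lambda>a b. a \<otimes>\<^bsub>S\<^esub> b) w \<one>\<^bsub>S\<^esub>"

definition fin_mon_gen :: "('a, 'b) monoid_scheme \<Rightarrow> 'a set \<Rightarrow> bool" where
  "fin_mon_gen S A \<longleftrightarrow> finite A \<and> A \<subseteq> carrier S \<and>
     (\<forall>x \<in> carrier S. \<exists>w. set w \<subseteq> A \<and> word_prod S w = x)"

definition finitely_generated_monoid :: "('a, 'b) monoid_scheme \<Rightarrow> bool" where
  "finitely_generated_monoid S \<longleftrightarrow> (\<exists>A. fin_mon_gen S A)"

text \<open>Directed word distance; Inf of the empty set is \<infinity>.\<close>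
definition word_dist :: "('a, 'b) monoid_scheme \<Rightarrow> 'a set \<Rightarrow> 'a \<Rightarrow> 'a \<Rightarrow> ereal" where
  "word_dist S A x y = Inf {ereal (real (length w)) | w. set w \<subseteq> A \<and> x \<otimes>\<^bsub>S\<^esub> word_prod S w = y}"

definition quasi_isometry ::
  "('a, 'b) monoid_scheme \<Rightarrow> 'a set \<Rightarrow> ('c, 'd) monoid_scheme \<Rightarrow> 'c set \<Rightarrow> ('a \<Rightarrow> 'c) \<Rightarrow> bool" where
  "quasi_isometry S A T B f \<longleftrightarrow> f \<in> carrier S \<rightarrow> carrier T \<and>
     (\<exists>(lam::real) (eps::real) (mu::real). 1 \<le> lam \<and> 0 < eps \<and> 0 \<le> mu \<and>
       (\<forall>x \<in> carrier S. \<forall>y \<in> carrier S.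
          ereal (1 / lam) * word_dist S A x y - ereal eps \<le> word_dist T B (f x) (f y) \<and>
          word_dist T B (f x) (f y) \<le> ereal lam * word_dist S A x y + ereal eps) \<and>
       (\<forall>t \<in> carrier T. \<exists>x \<in> carrier S.
          max (word_dist T B t (f x)) (word_dist T B (f x) t) \<le> ereal mu))"

definition quasi_isometric :: "('a, 'b) monoid_scheme \<Rightarrow> ('c, 'd) monoid_scheme \<Rightarrow> bool" where
  "quasi_isometric S T \<longleftrightarrow>
     (\<exists>A B f. fin_mon_gen S A \<and> fin_mon_gen T B \<and> quasi_isometry S A T B f)"

end

theory Submission
  imports Defs
begin

text \<open>Word distances in a group are finite, and a quasi-isometry distorts distances by at
  most a bounded factor, so the distance from any x to 1 in M is finite: x w = 1 for some word w.
  A monoid in which every element has a right inverse is a group.\<close>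

lemma (in monoid) group_r_invI:
  assumes r_inv_ex: "\<And>x. x \<in> carrier G \<Longrightarrow> \<exists>y \<in> carrier G. x \<otimes> y = \<one>"
  shows "group G"
proof (rule group_l_invI)
  fix x assume x: "x \<in> carrier G"
  obtain y where y: "y \<in> carrier G" "x \<otimes> y = \<one>" using r_inv_ex[OF x] by blast
  obtain z where z: "z \<in> carrier G" "y \<otimes> z = \<one>" using r_inv_ex[OF y(1)] by blast
  have "x = x \<otimes> (y \<otimes> z)" using x z by simp
  also have "\<dots> = (x \<otimes> y) \<otimes> z" using x(1) y(1) z(1) by (simp only: m_assoc)
  also have "\<dots> = z" using y z by simp
  finally have "x = z" .
  with y z show "\<exists>y \<in> carrier G. y \<otimes> x = \<one>" by blast
qed

lemma (in monoid) word_prod_closed: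
  "set w \<subseteq> carrier G \<Longrightarrow> word_prod G w \<in> carrier G"
  by (induction w) (auto simp: word_prod_def)

lemma word_dist_le_length:
  assumes "set w \<subseteq> A" "x \<otimes>\<^bsub>S\<^esub> word_prod S w = y"
  shows "word_dist S A x y \<le> ereal (real (length w))"
  unfolding word_dist_def using assms by (blast intro: Inf_lower)

lemma word_dist_finite_imp_word:
  assumes "word_dist S A x y \<noteq> \<infinity>"
  obtains w where "set w \<subseteq> A" "x \<otimes>\<^bsub>S\<^esub> word_prod S w = y"
proof -
  have "{ereal (real (length w)) | w. set w \<subseteq> A \<and> x \<otimes>\<^bsub>S\<^esub> word_prod S w = y} \<noteq> {}"
    using assms unfolding word_dist_def by (metis Inf_empty top_ereal_def)
  then show ?thesis using that by blast
qed

lemma (in group) word_dist_finite: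
  assumes "fin_mon_gen G B" "x \<in> carrier G" "y \<in> carrier G"
  shows "word_dist G B x y \<noteq> \<infinity>"
proof -
  obtain w where w: "set w \<subseteq> B" "word_prod G w = inv x \<otimes> y"
    using assms unfolding fin_mon_gen_def by (meson inv_closed m_closed)
  then have "x \<otimes> word_prod G w = y"
    using assms(2,3) by (simp flip: m_assoc)
  with w(1) have "word_dist G B x y \<le> ereal (real (length w))"
    by (rule word_dist_le_length)
  then show ?thesis by auto
qed

lemma quasi_isometry_reflects_finite_dist:
  assumes "quasi_isometry S A T B f" "x \<in> carrier S" "y \<in> carrier S"
    and "word_dist T B (f x) (f y) \<noteq> \<infinity>"
  shows "word_dist S A x y \<noteq> \<infinity>"
proof
  assume infinite: "word_dist S A x y = \<infinity>"
  obtain lam eps :: real where "1 \<le> lam"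
    and lower: "ereal (1 / lam) * word_dist S A x y - ereal eps \<le> word_dist T B (f x) (f y)"
    using assms(1-3) unfolding quasi_isometry_def by blast
  then have "ereal (1 / lam) * word_dist S A x y - ereal eps = \<infinity>"
    using infinite by simp
  with lower assms(4) show False by simp
qed

theorem proposition8p1:
  fixes M :: "('a, 'b) monoid_scheme" and G :: "('c, 'd) monoid_scheme"
  assumes "monoid M" and "finitely_generated_monoid M"
    and "group G" and "finitely_generated_monoid G"
    and "quasi_isometric M G"
  shows "group M"
proof (rule monoid.group_r_invI[OF assms(1)])
  obtain A B f where A: "fin_mon_gen M A" and B: "fin_mon_gen G B"
    and f: "quasi_isometry M A G B f"
    using assms(5) unfolding quasi_isometric_def by blast
  fix x assume x: "x \<in> carrier M"
  have one: "\<one>\<^bsub>M\<^esub> \<in> carrier M" by (rule monoid.one_closed[OF assms(1)])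
  have "f \<in> carrier M \<rightarrow> carrier G" using f unfolding quasi_isometry_def by blast
  then have "word_dist G B (f x) (f \<one>\<^bsub>M\<^esub>) \<noteq> \<infinity>"
    using group.word_dist_finite[OF assms(3) B] x one by blast
  then have "word_dist M A x \<one>\<^bsub>M\<^esub> \<noteq> \<infinity>"
    using quasi_isometry_reflects_finite_dist[OF f x one] by blast
  then obtain w where w: "set w \<subseteq> A" "x \<otimes>\<^bsub>M\<^esub> word_prod M w = \<one>\<^bsub>M\<^esub>"
    by (rule word_dist_finite_imp_word)
  have "word_prod M w \<in> carrier M"
    using A w(1) by (intro monoid.word_prod_closed[OF assms(1)]) (auto simp: fin_mon_gen_def)
  with w(2) show "\<exists>y \<in> carrier M. x \<otimes>\<^bsub>M\<^esub> y = \<one>\<^bsub>M\<^esub>" by blast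
qed

end
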